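(* Let $\langle\mathcal{P},\mathcal{S}\rangle$ be an ADP problem, let $\alpha\in\mathcal{S}$, and let $\mathrm{Pre}(\alpha)$ be the set of all ADPs $\beta\in\mathcal{P}$ such that the $\mathcal{P}$-dependency graph has an edge from some node in $\mathrm{dp}^\bot(\beta)$ to some node in $\mathrm{dp}^\bot(\alpha)$. If $\mathrm{Pre}(\alpha)\cap\mathcal{S}=\emptyset$, then the processor $\mathrm{Proc}_{\mathtt{KP}}(\langle\mathcal{P},\mathcal{S}\rangle)=(\mathrm{Pol}_0,\{\langle\mathcal{P},\mathcal{S}\setminus\{\alpha\}\rangle\})$ is sound.
   Context: Annotated dependency pairs (ADPs): over a finite signature $\Sigma$ with fresh annotated copies $f^\sharp$ of the defined symbols, an ADP is $\ell\to\{p_1:r_1,\dots,p_k:r_k\}^m$ with $\ell$ a non-variable unannotated term, $r_j$ possibly annotated, $\mathcal{V}(r_j)\subseteq\mathcal{V}(\ell)$, $0<p_j\le1$, $\sum p_j=1$, flag $m\in\{\mathsf{true},\mathsf{false}\}$. For a set $\mathcal{P}$, defined symbols are roots of left-hand sides; basic terms are $f(t_1,\dots,t_k)$ with $f$ defined, $t_i$ free of defined symbols; $|t|$ term size; $\flat$ removes annotations; $t^\sharp$ annotates the root; $\flat^\uparrow_\pi$ removes annotations strictly above $\pi$; $t\trianglelefteq_\sharp s$ means $t=\flat(s|_\pi)$ for a position $\pi$ of $s$ carrying an annotated symbol. Rewriting with $\mathcal{P}$ (innermost): at a position $\pi$ with defined or annotated symbol, ADP $\ell\to\{p_j:r_j\}^m\in\mathcal{P}$,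 $\sigma$ with $\flat(s|_\pi)=\ell\sigma$ whose proper subterms are normal forms: $t_j=s[r_j\sigma]_\pi$ (at: $m=\mathsf{true}$, $\pi$ annotated), $s[\flat(r_j)\sigma]_\pi$ (nt), $\flat^\uparrow_\pi(s[r_j\sigma]_\pi)$ (af), $\flat^\uparrow_\pi(s[\flat(r_j)\sigma]_\pi)$ (nf). A term is in argument normal form w.r.t. $\mathcal{P}$ if all its proper subterms are normal forms. $\mathcal{P}$-chain trees: possibly infinite finitely-branching trees with nodes $(p_v:t_v)$, root probability 1, $t_v$ rewriting to $\{\tfrac{p_w}{p_v}:t_w\}_w$ at inner nodes. For $\mathcal{S}\subseteq\mathcal{P}$, $\operatorname{edl}_{\langle\mathcal{P},\mathcal{S}\rangle}(\mathfrak{T})$ sums $p_v$ over inner nodes rewritten by (at)/(af)-steps with ADPs in $\mathcal{S}$; $\operatorname{edh}_{\langle\mathcal{P},\mathcal{S}\rangle}(t)$ = sup over chain trees rooted at $t^\sharp$; $\iota_{\langle\mathcal{P},\mathcal{S}\rangle}=\iota(n\mapsto\sup\{\operatorname{edh}_{\langle\mathcal{P},\mathcal{S}\rangle}(t)\mid t\text{ basic},|t|\le n\})$; complexities $\mathfrak{C}=\{\mathrm{Pol}_0,\mathrm{Pol}_1,\dots,\mathrm{Exp},\mathrm{2\text{-}Exp},\mathrm{Fin},\omega\}$ ordered in that order, $\oplus$ = maximum, $\iota(f)=\mathrm{Pol}_a$ for least $a$ with $f\in O(n^a)$, else $\mathrm{Exp}$ if $f\in O(2^{\mathrm{pol}(n)})$,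 else $\mathrm{2\text{-}Exp}$ if $f\in O(2^{2^{\mathrm{pol}(n)}})$, else $\mathrm{Fin}$ if $f$ never equals $\omega$, else $\omega$. Dependency graph: $\mathrm{np}(\mathcal{P})=\{\ell\to\flat(r_j)\mid\ell\to\{p_1:r_1,\dots,p_k:r_k\}^{\mathsf{true}}\in\mathcal{P}\}$. For $\alpha=\ell\to\{p_1:r_1,\dots,p_k:r_k\}^m$: $\mathrm{dp}(\alpha)=\{\ell^\sharp\to t^\sharp\mid1\le j\le k,t\trianglelefteq_\sharp r_j\}$; $\mathrm{dp}^\bot(\alpha)=\{\ell^\sharp\to\bot\}$ (fresh $\bot$) if $\mathrm{dp}(\alpha)=\emptyset$, else $\mathrm{dp}(\alpha)$; $\mathrm{dp}(\mathcal{P})=\bigcup_{\alpha\in\mathcal{P}}\mathrm{dp}^\bot(\alpha)$. The $\mathcal{P}$-dependency graph has nodes $\mathrm{dp}(\mathcal{P})$ and an edge from $\ell_1^\sharp\to t_1^\sharp$ to $\ell_2^\sharp\to\dots$ iff there are substitutions $\sigma_1,\sigma_2$ such that $t_1^\sharp\sigma_1$ reduces in zero or more innermost $\mathrm{np}(\mathcal{P})$-steps to $\ell_2^\sharp\sigma_2$ and $\ell_1^\sharp\sigma_1,\ell_2^\sharp\sigma_2$ are in argument normal form w.r.t. $\mathcal{P}$. ADP problems, proof trees, soundness: ADP problem $\langle\mathcal{P},\mathcal{S}\rangle$, $\mathcal{P}$ finite, $\mathcal{S}\subseteq\mathcal{P}$, solved iff $\mathcal{S}=\emptyset$. A processor maps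 an ADP problem to $(c,\{\langle\mathcal{P}_1,\mathcal{S}_1\rangle,\dots,\langle\mathcal{P}_n,\mathcal{S}_n\rangle\})$. A proof tree is a finite tree with labels $L_{\mathcal{A}}$ (ADP problems), $L_{\mathcal{C}}$ (complexities) where each inner node and its children arise by a processor application and leaves carry $\mathrm{Pol}_0$ if solved, $\omega$ otherwise; it is well formed if for each node $v$ with $L_{\mathcal{A}}(v)=\langle\mathcal{P},\mathcal{S}\rangle$ and root path $v_1,\dots,v_k=v$: $\iota_{\langle\mathcal{P},\mathcal{S}\rangle}\sqsubseteq L_{\mathcal{C}}(v_1)\oplus\dots\oplus L_{\mathcal{C}}(v_{k-1})\oplus\max\{L'_{\mathcal{C}}(w)\mid w$ reachable from $v$, incl. $v\}$ and $\iota_{\langle\mathcal{P},\mathcal{P}\setminus\mathcal{S}\rangle}\sqsubseteq L_{\mathcal{C}}(v_1)\oplus\dots\oplus L_{\mathcal{C}}(v_{k-1})$ ($L'_{\mathcal{C}}=L_{\mathcal{C}}$ on inner nodes, $\iota_{L_{\mathcal{A}}(w)}$ on leaves). A processor with output $(c,\{\langle\mathcal{P}_i,\mathcal{S}_i\rangle\}_{i\le n})$ on $\langle\mathcal{P},\mathcal{S}\rangle$ is sound if for every well-formed proof tree and node $v$ labeled $\langle\mathcal{P},\mathcal{S}\rangle$ with root path $v_1,\dots,v_k=v$: $\iota_{\langle\mathcal{P},\mathcal{S}\rangle}\sqsubseteq L_{\mathcal{C}}(v_1)\oplus\dots\oplus L_{\mathcal{C}}(v_{k-1})\oplus c\oplus\iota_{\langle\mathcal{P}_1,\mathcal{S}_1\rangle}\oplus\dots\oplus\iota_{\langle\mathcal{P}_n,\mathcal{S}_n\rangle}$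 and $\iota_{\langle\mathcal{P}_i,\mathcal{P}_i\setminus\mathcal{S}_i\rangle}\sqsubseteq L_{\mathcal{C}}(v_1)\oplus\dots\oplus L_{\mathcal{C}}(v_{k-1})\oplus c$ for all $i$. *)

theory Defs
  imports "HOL-Analysis.Infinite_Sum" "HOL-Library.Extended_Nonnegative_Real"
begin

text \<open>A term over function symbols 'f and variables 'v.  The boolean flag of a
  function node records whether the symbol is the annotated copy f-sharp (True)
  or the plain symbol f (False).\<close>

datatype ('f,'v) trm = Var 'v | Fun 'f bool "('f,'v) trm list"

type_synonym ('f,'v) subst = "'v \<Rightarrow> ('f,'v) trm"

fun flat :: "('f,'v) trm \<Rightarrow> ('f,'v) trm" where
  "flat (Var x) = Var x"
| "flat (Fun f b ts) = Fun f False (map flat ts)"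

fun sharp :: "('f,'v) trm \<Rightarrow> ('f,'v) trm" where
  "sharp (Var x) = Var x"
| "sharp (Fun f b ts) = Fun f True ts"

fun subst_apply :: "('f,'v) trm \<Rightarrow> ('f,'v) subst \<Rightarrow> ('f,'v) trm" (infixl "\<cdot>" 67) where
  "Var x \<cdot> \<sigma> = \<sigma> x"
| "Fun f b ts \<cdot> \<sigma> = Fun f b (map (\<lambda>t. t \<cdot> \<sigma>) ts)"

fun vars :: "('f,'v) trm \<Rightarrow> 'v set" where
  "vars (Var x) = {x}"
| "vars (Fun f b ts) = (\<Union>t\<in>set ts. vars t)"

fun tsize :: "('f,'v) trm \<Rightarrow> nat" where
  "tsize (Var x) = 1"
| "tsize (Fun f b ts) = Suc (sum_list (map tsize ts))"

fun funs :: "('f,'v) trm \<Rightarrow> ('f \<times> nat) set" where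
  "funs (Var x) = {}"
| "funs (Fun f b ts) = insert (f, length ts) (\<Union>t\<in>set ts. funs t)"

fun annot_funs :: "('f,'v) trm \<Rightarrow> ('f \<times> nat) set" where
  "annot_funs (Var x) = {}"
| "annot_funs (Fun f b ts) = (if b then {(f, length ts)} else {}) \<union> (\<Union>t\<in>set ts. annot_funs t)"

text \<open>Term over the signature (the annotated copy of f has the arity of f).\<close>
fun wf_trm :: "('f \<times> nat) set \<Rightarrow> ('f,'v) trm \<Rightarrow> bool" where
  "wf_trm \<Sigma> (Var x) = True"
| "wf_trm \<Sigma> (Fun f b ts) = ((f, length ts) \<in> \<Sigma> \<and> (\<forall>t\<in>set ts. wf_trm \<Sigma> t))"

fun is_pos :: "nat list \<Rightarrow> ('f,'v) trm \<Rightarrow> bool" where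
  "is_pos [] t = True"
| "is_pos (i # p) (Var x) = False"
| "is_pos (i # p) (Fun f b ts) = (i < length ts \<and> is_pos p (ts ! i))"

fun subt_at :: "('f,'v) trm \<Rightarrow> nat list \<Rightarrow> ('f,'v) trm" where
  "subt_at t [] = t"
| "subt_at (Var x) (i # p) = Var x"
| "subt_at (Fun f b ts) (i # p) = subt_at (ts ! i) p"

fun repl :: "('f,'v) trm \<Rightarrow> nat list \<Rightarrow> ('f,'v) trm \<Rightarrow> ('f,'v) trm" where
  "repl t [] u = u"
| "repl (Var x) (i # p) u = Var x"
| "repl (Fun f b ts) (i # p) u = Fun f b (ts[i := repl (ts ! i) p u])"

fun flat_above :: "nat list \<Rightarrow> ('f,'v) trm \<Rightarrow> ('f,'v) trm" where
  "flat_above [] t = t"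
| "flat_above (i # p) (Var x) = Var x"
| "flat_above (i # p) (Fun f b ts) = Fun f False (ts[i := flat_above p (ts ! i)])"

definition annot_at :: "('f,'v) trm \<Rightarrow> nat list \<Rightarrow> bool" where
  "annot_at t p = (case subt_at t p of Var x \<Rightarrow> False | Fun f b ts \<Rightarrow> b)"

definition root :: "('f,'v) trm \<Rightarrow> ('f \<times> nat) option" where
  "root t = (case t of Var x \<Rightarrow> None | Fun f b ts \<Rightarrow> Some (f, length ts))"

text \<open>An ADP  l \<rightarrow> {p1:r1,...,pk:rk}^m ; the multi-distribution is a list.\<close>
datatype ('f,'v) adp = ADP (adp_lhs: "('f,'v) trm") (adp_rhs: "(real \<times> ('f,'v) trm) list") (adp_flag: bool)

type_synonym ('f,'v) adp_problem = "('f,'v) adp set \<times> ('f,'v) adp set"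

definition defs :: "('f,'v) adp set \<Rightarrow> ('f \<times> nat) set" where
  "defs P = {fn. \<exists>\<alpha>\<in>P. root (adp_lhs \<alpha>) = Some fn}"

definition adp_ok :: "('f \<times> nat) set \<Rightarrow> ('f,'v) adp set \<Rightarrow> ('f,'v) adp \<Rightarrow> bool" where
  "adp_ok \<Sigma> P \<alpha> \<longleftrightarrow>
     (\<exists>f ts. adp_lhs \<alpha> = Fun f False ts) \<and> flat (adp_lhs \<alpha>) = adp_lhs \<alpha> \<and> wf_trm \<Sigma> (adp_lhs \<alpha>) \<and>
     (\<forall>(p, r) \<in> set (adp_rhs \<alpha>). 0 < p \<and> p \<le> 1 \<and> vars r \<subseteq> vars (adp_lhs \<alpha>) \<and> wf_trm \<Sigma> r
         \<and> annot_funs r \<subseteq> defs P) \<and>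
     sum_list (map fst (adp_rhs \<alpha>)) = 1"

definition is_adp_problem :: "('f \<times> nat) set \<Rightarrow> ('f,'v) adp_problem \<Rightarrow> bool" where
  "is_adp_problem \<Sigma> PS \<longleftrightarrow> finite (fst PS) \<and> snd PS \<subseteq> fst PS \<and> (\<forall>\<alpha>\<in>fst PS. adp_ok \<Sigma> (fst PS) \<alpha>)"

definition NF :: "('f,'v) adp set \<Rightarrow> ('f,'v) trm \<Rightarrow> bool" where
  "NF P u \<longleftrightarrow> \<not> (\<exists>\<pi> \<alpha> \<sigma>. is_pos \<pi> u \<and> \<alpha> \<in> P \<and> flat (subt_at u \<pi>) = adp_lhs \<alpha> \<cdot> \<sigma>)"

definition ANF :: "('f,'v) adp set \<Rightarrow> ('f,'v) trm \<Rightarrow> bool" where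
  "ANF P u \<longleftrightarrow> (\<forall>\<pi>. is_pos \<pi> u \<and> \<pi> \<noteq> [] \<longrightarrow> NF P (subt_at u \<pi>))"

definition step_ok :: "('f,'v) adp set \<Rightarrow> ('f,'v) trm \<Rightarrow> nat list \<Rightarrow> ('f,'v) adp \<Rightarrow> ('f,'v) subst \<Rightarrow> bool" where
  "step_ok P s \<pi> \<alpha> \<sigma> \<longleftrightarrow> is_pos \<pi> s \<and> \<alpha> \<in> P \<and>
     (case subt_at s \<pi> of Var x \<Rightarrow> False | Fun f b ts \<Rightarrow> b \<or> (f, length ts) \<in> defs P) \<and>
     flat (subt_at s \<pi>) = adp_lhs \<alpha> \<cdot> \<sigma> \<and> ANF P (adp_lhs \<alpha> \<cdot> \<sigma>)"

text \<open>The resulting multi-distribution, by the cases (at), (nt), (af), (nf).\<close>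
definition step_result :: "('f,'v) trm \<Rightarrow> nat list \<Rightarrow> ('f,'v) adp \<Rightarrow> ('f,'v) subst \<Rightarrow> (real \<times> ('f,'v) trm) list" where
  "step_result s \<pi> \<alpha> \<sigma> = map (\<lambda>(p, r). (p,
      if adp_flag \<alpha> \<and> annot_at s \<pi> then repl s \<pi> (r \<cdot> \<sigma>)
      else if adp_flag \<alpha> then repl s \<pi> (flat r \<cdot> \<sigma>)
      else if annot_at s \<pi> then flat_above \<pi> (repl s \<pi> (r \<cdot> \<sigma>))
      else flat_above \<pi> (repl s \<pi> (flat r \<cdot> \<sigma>)))) (adp_rhs \<alpha>)"

text \<open>A (possibly infinite, finitely branching) tree: nodes are addressed by lists of child
  indices; each node carries its probability and term, and each inner node records the
  rewrite step (position, ADP, substitution) used to obtain its children.\<close>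
record ('f,'v) ctree =
  ct_nodes :: "nat list set"
  ct_prob :: "nat list \<Rightarrow> real"
  ct_term :: "nat list \<Rightarrow> ('f,'v) trm"
  ct_pos :: "nat list \<Rightarrow> nat list"
  ct_adp :: "nat list \<Rightarrow> ('f,'v) adp"
  ct_sub :: "nat list \<Rightarrow> ('f,'v) subst"

definition ct_inner :: "('f,'v) ctree \<Rightarrow> nat list \<Rightarrow> bool" where
  "ct_inner T v \<longleftrightarrow> v \<in> ct_nodes T \<and> (\<exists>i. v @ [i] \<in> ct_nodes T)"

definition chain_tree :: "('f,'v) adp set \<Rightarrow> ('f,'v) trm \<Rightarrow> ('f,'v) ctree \<Rightarrow> bool" where
  "chain_tree P t0 T \<longleftrightarrow>
     [] \<in> ct_nodes T \<and> (\<forall>v i. v @ [i] \<in> ct_nodes T \<longrightarrow> v \<in> ct_nodes T) \<and>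
     ct_prob T [] = 1 \<and> ct_term T [] = t0 \<and>
     (\<forall>v. ct_inner T v \<longrightarrow>
        (let \<mu> = step_result (ct_term T v) (ct_pos T v) (ct_adp T v) (ct_sub T v) in
          step_ok P (ct_term T v) (ct_pos T v) (ct_adp T v) (ct_sub T v) \<and>
          (\<forall>i. v @ [i] \<in> ct_nodes T \<longleftrightarrow> i < length \<mu>) \<and>
          (\<forall>i < length \<mu>. ct_prob T (v @ [i]) = ct_prob T v * fst (\<mu> ! i)
                         \<and> ct_term T (v @ [i]) = snd (\<mu> ! i))))"

text \<open>Expected derivation length: inner nodes rewritten by (at)/(af)-steps (annotated
  position) with an ADP in S.\<close>
definition edl :: "('f,'v) adp set \<Rightarrow> ('f,'v) ctree \<Rightarrow> ennreal" where
  "edl S T = (\<Sum>\<^sub>\<infinity>v \<in> {v. ct_inner T v \<and> annot_at (ct_term T v) (ct_pos T v) \<and> ct_adp T v \<in> S}.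
                 ennreal (ct_prob T v))"

definition edh :: "('f,'v) adp_problem \<Rightarrow> ('f,'v) trm \<Rightarrow> ennreal" where
  "edh PS t = Sup {edl (snd PS) T | T. chain_tree (fst PS) (sharp t) T}"

definition basic :: "('f \<times> nat) set \<Rightarrow> ('f,'v) adp set \<Rightarrow> ('f,'v) trm \<Rightarrow> bool" where
  "basic \<Sigma> P t \<longleftrightarrow> wf_trm \<Sigma> t \<and> flat t = t \<and>
     (\<exists>f ts. t = Fun f False ts \<and> (f, length ts) \<in> defs P \<and> (\<forall>u\<in>set ts. funs u \<inter> defs P = {}))"

definition rc_fun :: "('f \<times> nat) set \<Rightarrow> ('f,'v) adp_problem \<Rightarrow> nat \<Rightarrow> ennreal" where
  "rc_fun \<Sigma> PS n = Sup {edh PS t | t. basic \<Sigma> (fst PS) t \<and> tsize t \<le> n}"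

datatype cplx = Pol nat | Exp | Exp2 | Fin | Omega

fun crank :: "cplx \<Rightarrow> nat" where
  "crank (Pol a) = 0" | "crank Exp = 1" | "crank Exp2 = 2" | "crank Fin = 3" | "crank Omega = 4"

fun cdeg :: "cplx \<Rightarrow> nat" where
  "cdeg (Pol a) = a" | "cdeg Exp = 0" | "cdeg Exp2 = 0" | "cdeg Fin = 0" | "cdeg Omega = 0"

instantiation cplx :: linorder
begin
definition less_eq_cplx :: "cplx \<Rightarrow> cplx \<Rightarrow> bool" where
  "x \<le> y \<longleftrightarrow> crank x < crank y \<or> (crank x = crank y \<and> cdeg x \<le> cdeg y)"
definition less_cplx :: "cplx \<Rightarrow> cplx \<Rightarrow> bool" where
  "x < y \<longleftrightarrow> crank x < crank y \<or> (crank x = crank y \<and> cdeg x < cdeg y)"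
instance
proof
  fix x y z :: cplx
  show "(x < y) = (x \<le> y \<and> \<not> y \<le> x)" by (auto simp: less_eq_cplx_def less_cplx_def)
  show "x \<le> x" by (simp add: less_eq_cplx_def)
  show "x \<le> y \<Longrightarrow> y \<le> z \<Longrightarrow> x \<le> z" by (auto simp: less_eq_cplx_def)
  show "x \<le> y \<Longrightarrow> y \<le> x \<Longrightarrow> x = y"
    by (cases x; cases y; auto simp: less_eq_cplx_def)
  show "x \<le> y \<or> y \<le> x" by (auto simp: less_eq_cplx_def)
qed
end

definition bigO :: "(nat \<Rightarrow> ennreal) \<Rightarrow> (nat \<Rightarrow> real) \<Rightarrow> bool" where
  "bigO f g \<longleftrightarrow> (\<exists>c::real. \<exists>N. \<forall>n\<ge>N. f n \<le> ennreal (c * g n))"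

definition iota :: "(nat \<Rightarrow> ennreal) \<Rightarrow> cplx" where
  "iota f = (if \<exists>a. bigO f (\<lambda>n. real n ^ a) then Pol (LEAST a. bigO f (\<lambda>n. real n ^ a))
     else if \<exists>k::nat. bigO f (\<lambda>n. 2 ^ (n ^ k)) then Exp
     else if \<exists>k::nat. bigO f (\<lambda>n. 2 ^ (2 ^ (n ^ k))) then Exp2
     else if \<forall>n. f n \<noteq> \<infinity> then Fin
     else Omega)"

definition iota_prob :: "('f \<times> nat) set \<Rightarrow> ('f,'v) adp_problem \<Rightarrow> cplx" where
  "iota_prob \<Sigma> PS = iota (rc_fun \<Sigma> PS)"

datatype ('f,'v) ptree = PT (pt_prob: "('f,'v) adp_problem") (pt_cplx: cplx) (pt_children: "('f,'v) ptree list")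

fun pt_at :: "('f,'v) ptree \<Rightarrow> nat list \<Rightarrow> ('f,'v) ptree option" where
  "pt_at T [] = Some T"
| "pt_at (PT l c ts) (i # p) = (if i < length ts then pt_at (ts ! i) p else None)"

text \<open>Maximum of the complexity labels of the strict ancestors of the node at position p
  (Pol 0, the least complexity, for the empty maximum).\<close>
fun pt_prefix :: "('f,'v) ptree \<Rightarrow> nat list \<Rightarrow> cplx" where
  "pt_prefix T [] = Pol 0"
| "pt_prefix (PT l c ts) (i # p) = max c (pt_prefix (ts ! i) p)"

text \<open>Maximum of L'_C over all nodes reachable from the root of the given tree
  (L'_C is the label on inner nodes and iota of the problem on leaves).\<close>
fun pt_maxL' :: "('f \<times> nat) set \<Rightarrow> ('f,'v) ptree \<Rightarrow> cplx" where
  "pt_maxL' \<Sigma> (PT l c ts) =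
     (if ts = [] then iota_prob \<Sigma> l else fold max (map (pt_maxL' \<Sigma>) ts) c)"

fun proof_tree :: "('f \<times> nat) set \<Rightarrow> ('f,'v) ptree \<Rightarrow> bool" where
  "proof_tree \<Sigma> (PT l c ts) \<longleftrightarrow> is_adp_problem \<Sigma> l \<and>
     (ts = [] \<longrightarrow> c = (if snd l = {} then Pol 0 else Omega)) \<and>
     (\<forall>t\<in>set ts. proof_tree \<Sigma> t)"

definition well_formed :: "('f \<times> nat) set \<Rightarrow> ('f,'v) ptree \<Rightarrow> bool" where
  "well_formed \<Sigma> T \<longleftrightarrow> (\<forall>p T'. pt_at T p = Some T' \<longrightarrow>
     (case pt_prob T' of (P, S) \<Rightarrow>
        iota_prob \<Sigma> (P, S) \<le> max (pt_prefix T p) (pt_maxL' \<Sigma> T') \<and>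
        iota_prob \<Sigma> (P, P - S) \<le> pt_prefix T p))"

definition sound_output :: "('f \<times> nat) set \<Rightarrow> ('f,'v) adp_problem \<Rightarrow> cplx \<Rightarrow> ('f,'v) adp_problem list \<Rightarrow> bool" where
  "sound_output \<Sigma> PS c outs \<longleftrightarrow> (\<forall>T p T'.
     proof_tree \<Sigma> T \<and> well_formed \<Sigma> T \<and> pt_at T p = Some T' \<and> pt_prob T' = PS \<longrightarrow>
       iota_prob \<Sigma> PS \<le> fold max (map (iota_prob \<Sigma>) outs) (max (pt_prefix T p) c) \<and>
       (\<forall>(Pi, Si) \<in> set outs. iota_prob \<Sigma> (Pi, Pi - Si) \<le> max (pt_prefix T p) c))"

definition np :: "('f,'v) adp set \<Rightarrow> (('f,'v) trm \<times> ('f,'v) trm) set" where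
  "np P = {(adp_lhs \<alpha>, flat r) | \<alpha> p r. \<alpha> \<in> P \<and> adp_flag \<alpha> \<and> (p, r) \<in> set (adp_rhs \<alpha>)}"

definition NF_trs :: "(('f,'v) trm \<times> ('f,'v) trm) set \<Rightarrow> ('f,'v) trm \<Rightarrow> bool" where
  "NF_trs R u \<longleftrightarrow> \<not> (\<exists>\<pi> l r \<sigma>. is_pos \<pi> u \<and> (l, r) \<in> R \<and> subt_at u \<pi> = l \<cdot> \<sigma>)"

definition istep :: "(('f,'v) trm \<times> ('f,'v) trm) set \<Rightarrow> (('f,'v) trm \<times> ('f,'v) trm) set" where
  "istep R = {(s, t). \<exists>\<pi> l r \<sigma>. is_pos \<pi> s \<and> (l, r) \<in> R \<and> subt_at s \<pi> = l \<cdot> \<sigma> \<and>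
      (\<forall>\<pi>'. is_pos \<pi>' (l \<cdot> \<sigma>) \<and> \<pi>' \<noteq> [] \<longrightarrow> NF_trs R (subt_at (l \<cdot> \<sigma>) \<pi>')) \<and>
      t = repl s \<pi> (r \<cdot> \<sigma>)}"

text \<open>Dependency pairs; None plays the role of the fresh symbol bottom.\<close>
type_synonym ('f,'v) dpair = "('f,'v) trm \<times> ('f,'v) trm option"

definition dp :: "('f,'v) adp \<Rightarrow> ('f,'v) dpair set" where
  "dp \<alpha> = {(sharp (adp_lhs \<alpha>), Some (sharp t)) | t. \<exists>p r \<pi>. (p, r) \<in> set (adp_rhs \<alpha>) \<and>
              is_pos \<pi> r \<and> annot_at r \<pi> \<and> t = flat (subt_at r \<pi>)}"

definition dp_bot :: "('f,'v) adp \<Rightarrow> ('f,'v) dpair set" where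
  "dp_bot \<alpha> = (if dp \<alpha> = {} then {(sharp (adp_lhs \<alpha>), None)} else dp \<alpha>)"

definition dpP :: "('f,'v) adp set \<Rightarrow> ('f,'v) dpair set" where
  "dpP P = (\<Union>\<alpha>\<in>P. dp_bot \<alpha>)"

definition dg_edge :: "('f,'v) adp set \<Rightarrow> ('f,'v) dpair \<Rightarrow> ('f,'v) dpair \<Rightarrow> bool" where
  "dg_edge P n1 n2 \<longleftrightarrow> n1 \<in> dpP P \<and> n2 \<in> dpP P \<and>
     (case snd n1 of None \<Rightarrow> False
      | Some t1 \<Rightarrow> \<exists>\<sigma>1 \<sigma>2. (t1 \<cdot> \<sigma>1, fst n2 \<cdot> \<sigma>2) \<in> (istep (np P))\<^sup>* \<and>
                         ANF P (fst n1 \<cdot> \<sigma>1) \<and> ANF P (fst n2 \<cdot> \<sigma>2))"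

definition Pre :: "('f,'v) adp set \<Rightarrow> ('f,'v) adp \<Rightarrow> ('f,'v) adp set" where
  "Pre P \<alpha> = {\<beta> \<in> P. \<exists>n1 \<in> dp_bot \<beta>. \<exists>n2 \<in> dp_bot \<alpha>. dg_edge P n1 n2}"

end

theory Submission
  imports Defs
begin

text \<open>Call the potential of a term the number of its annotated subterms that can still reach, by
  innermost np-rewriting, an instance of the left-hand side of \<alpha>. An annotated step with \<alpha>
  consumes one such subterm, and rewriting below an annotation preserves reachability backwards.
  An annotated step with an ADP \<gamma> of S creates none: a new annotated subterm reaching the
  left-hand side of \<alpha> would be a dependency graph edge from \<gamma> to \<alpha>, putting \<gamma> into
  Pre(\<alpha>) \<inter> S. An annotated step with an ADP outside S creates at most K, the total number of
  annotations in right-hand sides of P. By optional stopping, the expected number of \<alpha>-steps in a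
  chain tree is at most 1 + K times the expected number of steps with ADPs outside S. Hence
  rc(P,S) \<le> rc(P,S-{\<alpha>}) + 1 + K rc(P,P-S) and rc(P,P-(S-{\<alpha>})) \<le> (1 + K) rc(P,P-S) + 1,
  which keeps both complexities within the required bounds.\<close>

section \<open>Flattening, substitution and positions\<close>

lemma flat_idem [simp]: "flat (flat t) = flat t"
  by (induction t) (auto simp: map_idI)

lemma vars_flat [simp]: "vars (flat t) = vars t"
  by (induction t) auto

lemma flat_subst: "flat (t \<cdot> \<sigma>) = flat t \<cdot> (flat \<circ> \<sigma>)"
  by (induction t) auto

lemma subst_cong: "(\<And>x. x \<in> vars t \<Longrightarrow> \<sigma> x = \<tau> x) \<Longrightarrow> t \<cdot> \<sigma> = t \<cdot> \<tau>"
  by (induction t) auto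

lemma subst_eqD: "t \<cdot> \<sigma> = t \<cdot> \<tau> \<Longrightarrow> x \<in> vars t \<Longrightarrow> \<sigma> x = \<tau> x"
  by (induction t) (auto simp: map_eq_conv)

lemma flat_subst_flat_range:
  "(\<And>x. x \<in> vars t \<Longrightarrow> flat (\<sigma> x) = \<sigma> x) \<Longrightarrow> flat (t \<cdot> \<sigma>) = flat t \<cdot> \<sigma>"
  unfolding flat_subst by (rule subst_cong) auto

lemma is_pos_flat [simp]: "is_pos \<pi> (flat s) = is_pos \<pi> s"
  by (induction \<pi> s rule: is_pos.induct) auto

lemma subt_at_flat: "is_pos \<pi> s \<Longrightarrow> subt_at (flat s) \<pi> = flat (subt_at s \<pi>)"
  by (induction \<pi> s rule: is_pos.induct) auto

lemma flat_repl: "is_pos \<pi> s \<Longrightarrow> flat (repl s \<pi> w) = repl (flat s) \<pi> (flat w)"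
  by (induction \<pi> s rule: is_pos.induct) (auto simp: map_update)

lemma vars_subt_at: "is_pos \<pi> r \<Longrightarrow> vars (subt_at r \<pi>) \<subseteq> vars r"
  by (induction \<pi> r rule: is_pos.induct) (auto dest: nth_mem)

lemma is_pos_sharp: "\<pi> \<noteq> [] \<Longrightarrow> is_pos \<pi> (sharp t) = is_pos \<pi> t"
  by (cases t; cases \<pi>) auto

lemma subt_at_sharp: "\<pi> \<noteq> [] \<Longrightarrow> subt_at (sharp t) \<pi> = subt_at t \<pi>"
  by (cases t; cases \<pi>) auto

lemma repl_sharp: "\<pi> \<noteq> [] \<Longrightarrow> repl (sharp t) \<pi> w = sharp (repl t \<pi> w)"
  by (cases t; cases \<pi>) auto

lemma ANF_sharp [simp]: "ANF P (sharp t) = ANF P t"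
  unfolding ANF_def by (metis is_pos_sharp subt_at_sharp)

lemma NF_imp_NF_trs_np:
  assumes lhs_flat: "\<forall>\<beta>\<in>P. flat (adp_lhs \<beta>) = adp_lhs \<beta>" and "NF P v"
  shows "NF_trs (np P) v"
  unfolding NF_trs_def
proof clarify
  fix \<pi> l r \<tau> assume "is_pos \<pi> v" "(l, r) \<in> np P" "subt_at v \<pi> = l \<cdot> \<tau>"
  moreover from \<open>(l, r) \<in> np P\<close> obtain \<beta> where "\<beta> \<in> P" "l = adp_lhs \<beta>"
    unfolding np_def by auto
  ultimately have "flat (subt_at v \<pi>) = adp_lhs \<beta> \<cdot> (flat \<circ> \<tau>)"
    using lhs_flat by (simp add: flat_subst)
  with \<open>NF P v\<close> \<open>is_pos \<pi> v\<close> \<open>\<beta> \<in> P\<close> show False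
    unfolding NF_def by blast
qed

lemma adp_okD:
  assumes "adp_ok \<Sigma> P \<beta>"
  shows adp_ok_lhs_flat: "flat (adp_lhs \<beta>) = adp_lhs \<beta>"
    and adp_ok_sharp_lhs_subst: "sharp (adp_lhs \<beta>) \<cdot> \<sigma> = sharp (adp_lhs \<beta> \<cdot> \<sigma>)"
    and adp_ok_rhs_vars: "(p, r) \<in> set (adp_rhs \<beta>) \<Longrightarrow> vars r \<subseteq> vars (adp_lhs \<beta>)"
    and adp_ok_prob_nonneg: "(p, r) \<in> set (adp_rhs \<beta>) \<Longrightarrow> 0 \<le> p"
    and adp_ok_prob_sum: "sum_list (map fst (adp_rhs \<beta>)) = 1"
  using assms unfolding adp_ok_def by fastforce+

lemma step_ok_subst_flat:
  assumes "step_ok P s \<pi> \<gamma> \<sigma>" "flat (adp_lhs \<gamma>) = adp_lhs \<gamma>" "x \<in> vars (adp_lhs \<gamma>)"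
  shows "flat (\<sigma> x) = \<sigma> x"
proof -
  have "flat (adp_lhs \<gamma> \<cdot> \<sigma>) = adp_lhs \<gamma> \<cdot> \<sigma>"
    using assms(1) unfolding step_ok_def by (metis flat_idem)
  then have "adp_lhs \<gamma> \<cdot> (flat \<circ> \<sigma>) = adp_lhs \<gamma> \<cdot> \<sigma>"
    using assms(2) by (simp add: flat_subst)
  from subst_eqD[OF this assms(3)] show ?thesis by simp
qed

lemma step_ok_rhs_subst_flat:
  assumes wf: "\<forall>\<beta>\<in>P. adp_ok \<Sigma> P \<beta>" and "step_ok P s \<pi> \<gamma> \<sigma>"
    and "(p, r) \<in> set (adp_rhs \<gamma>)" "x \<in> vars r"
  shows "flat (\<sigma> x) = \<sigma> x"
proof -
  have "adp_ok \<Sigma> P \<gamma>" using wf assms(2) unfolding step_ok_def by blast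
  then show ?thesis
    using step_ok_subst_flat[OF assms(2)] adp_ok_lhs_flat adp_ok_rhs_vars assms(3,4) by blast
qed

section \<open>Counting annotated subterms\<close>

fun annot_count :: "('f,'v) trm \<Rightarrow> nat" where
  "annot_count (Var x) = 0"
| "annot_count (Fun f b ts) = (if b then 1 else 0) + sum_list (map annot_count ts)"

fun annot_count_if :: "(('f,'v) trm \<Rightarrow> bool) \<Rightarrow> ('f,'v) trm \<Rightarrow> nat" where
  "annot_count_if R (Var x) = 0"
| "annot_count_if R (Fun f b ts) =
     (if b \<and> R (Fun f b ts) then 1 else 0) + sum_list (map (annot_count_if R) ts)"

lemma sum_list_map_list_update:
  fixes f :: "'a \<Rightarrow> nat"
  assumes "i < length xs"
  shows "sum_list (map f (xs[i := y])) + f (xs ! i) = sum_list (map f xs) + f y"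
proof -
  have "f (xs ! i) \<le> sum_list (map f xs)"
    using elem_le_sum_list[of i "map f xs"] assms by simp
  then show ?thesis
    using sum_list_update[of i "map f xs" "f y"] assms by (simp add: map_update)
qed

lemma annot_count_if_le: "annot_count_if R t \<le> annot_count t"
proof (induction t)
  case (Fun f b ts)
  then have "sum_list (map (annot_count_if R) ts) \<le> sum_list (map annot_count ts)"
    by (intro sum_list_mono) auto
  then show ?case by simp
qed simp

lemma annot_count_flat [simp]: "annot_count (flat t) = 0"
  by (induction t) (auto simp: o_def)

lemma annot_count_subst:
  "(\<And>x. x \<in> vars t \<Longrightarrow> flat (\<sigma> x) = \<sigma> x) \<Longrightarrow> annot_count (t \<cdot> \<sigma>) = annot_count t"
proof (induction t)
  case (Var x)
  then show ?case by (metis annot_count.simps(1) annot_count_flat subst_apply.simps(1) vars.simps(1) singletonI)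
next
  case (Fun f b ts)
  then have "sum_list (map (\<lambda>t. annot_count (t \<cdot> \<sigma>)) ts) = sum_list (map annot_count ts)"
    by (intro arg_cong[where f = sum_list] map_cong) auto
  then show ?case by (simp add: o_def)
qed

lemma annot_count_if_subst_le:
  "(\<And>x. x \<in> vars t \<Longrightarrow> flat (\<sigma> x) = \<sigma> x) \<Longrightarrow> annot_count_if R (t \<cdot> \<sigma>) \<le> annot_count t"
  using annot_count_if_le annot_count_subst by metis

lemma annot_count_if_subst_eq_0:
  "(\<And>x. x \<in> vars r \<Longrightarrow> flat (\<sigma> x) = \<sigma> x) \<Longrightarrow>
   (\<And>\<rho>. is_pos \<rho> r \<Longrightarrow> annot_at r \<rho> \<Longrightarrow> \<not> R (subt_at r \<rho> \<cdot> \<sigma>)) \<Longrightarrow>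
   annot_count_if R (r \<cdot> \<sigma>) = 0"
proof (induction r)
  case (Var x)
  then have "annot_count (\<sigma> x) = 0" by (metis annot_count_flat vars.simps(1) singletonI)
  then show ?case using annot_count_if_le[of R "\<sigma> x"] by simp
next
  case (Fun f b ts)
  have "\<not> (b \<and> R (Fun f b ts \<cdot> \<sigma>))"
    using Fun.prems(2)[of "[]"] by (auto simp: annot_at_def)
  moreover have "annot_count_if R (t \<cdot> \<sigma>) = 0" if t: "t \<in> set ts" for t
  proof -
    obtain j where j: "j < length ts" "ts ! j = t" using t by (auto simp: in_set_conv_nth)
    show ?thesis
    proof (rule Fun.IH[OF t])
      show "flat (\<sigma> x) = \<sigma> x" if "x \<in> vars t" for x using Fun.prems(1) that t by auto
      show "\<not> R (subt_at t \<rho> \<cdot> \<sigma>)" if "is_pos \<rho> t" "annot_at t \<rho>" for \<rho>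
        using Fun.prems(2)[of "j # \<rho>"] that j by (auto simp: annot_at_def)
    qed
  qed
  ultimately show ?case by (auto simp: o_def)
qed

lemma annot_count_if_flat_above_repl:
  "is_pos \<pi> s \<Longrightarrow>
   annot_count_if R (flat_above \<pi> (repl s \<pi> w)) + annot_count_if R (subt_at s \<pi>)
     \<le> annot_count_if R s + annot_count_if R w"
proof (induction \<pi> s rule: is_pos.induct)
  case (3 i p f b ts)
  then have "i < length ts" by simp
  with 3 show ?case
    using sum_list_map_list_update[of i ts "annot_count_if R" "flat_above p (repl (ts ! i) p w)"]
    by simp
qed auto

lemma annot_count_if_repl:
  assumes R_back: "\<And>u \<pi>'. is_pos \<pi>' u \<Longrightarrow> \<pi>' \<noteq> [] \<Longrightarrow> flat (subt_at u \<pi>') = L \<Longrightarrow>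
      R (repl u \<pi>' w) \<Longrightarrow> R u"
  shows "is_pos \<pi> s \<Longrightarrow> flat (subt_at s \<pi>) = L \<Longrightarrow>
    annot_count_if R (repl s \<pi> w) + annot_count_if R (subt_at s \<pi>)
      \<le> annot_count_if R s + annot_count_if R w"
proof (induction \<pi> s rule: is_pos.induct)
  case (3 i p f b ts)
  then have i: "i < length ts" by simp
  have "R (repl (Fun f b ts) (i # p) w) \<Longrightarrow> R (Fun f b ts)"
    using R_back[of "i # p" "Fun f b ts"] 3 by simp
  with 3 i show ?case
    using sum_list_map_list_update[of i ts "annot_count_if R" "repl (ts ! i) p w"]
    by (auto split: if_splits)
qed auto

section \<open>Reaching the left-hand side of an ADP\<close>

definition reaches_lhs :: "('f,'v) adp set \<Rightarrow> ('f,'v) adp \<Rightarrow> ('f,'v) trm \<Rightarrow> bool" where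
  "reaches_lhs P \<alpha> u \<longleftrightarrow> (\<exists>\<sigma>. (sharp (flat u), sharp (adp_lhs \<alpha>) \<cdot> \<sigma>) \<in> (istep (np P))\<^sup>* \<and>
      ANF P (sharp (adp_lhs \<alpha>) \<cdot> \<sigma>))"

text \<open>An (at)/(nt)-step below the root of u is an innermost np-step on the flattened term, so
  reachability is inherited backwards along it.\<close>
lemma reaches_lhs_np_step_backward:
  assumes wf: "\<forall>\<beta>\<in>P. adp_ok \<Sigma> P \<beta>"
    and \<gamma>: "\<gamma> \<in> P" "adp_flag \<gamma>" "(p, r) \<in> set (adp_rhs \<gamma>)"
    and anf: "ANF P (adp_lhs \<gamma> \<cdot> \<sigma>)" and w: "flat w = flat r \<cdot> \<sigma>"
    and u: "is_pos \<pi> u" "\<pi> \<noteq> []" "flat (subt_at u \<pi>) = adp_lhs \<gamma> \<cdot> \<sigma>"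
    and reach: "reaches_lhs P \<alpha> (repl u \<pi> w)"
  shows "reaches_lhs P \<alpha> u"
proof -
  have lhs_flat: "\<forall>\<beta>\<in>P. flat (adp_lhs \<beta>) = adp_lhs \<beta>"
    using wf adp_ok_lhs_flat by blast
  have "(sharp (flat u), sharp (flat (repl u \<pi> w))) \<in> istep (np P)"
    unfolding istep_def
  proof (clarify, intro exI conjI)
    show "is_pos \<pi> (sharp (flat u))" using u by (simp add: is_pos_sharp)
    show "(adp_lhs \<gamma>, flat r) \<in> np P" unfolding np_def using \<gamma> by blast
    show "subt_at (sharp (flat u)) \<pi> = adp_lhs \<gamma> \<cdot> \<sigma>"
      using u by (simp add: subt_at_sharp subt_at_flat)
    show "\<forall>\<pi>'. is_pos \<pi>' (adp_lhs \<gamma> \<cdot> \<sigma>) \<and> \<pi>' \<noteq> [] \<longrightarrow>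
        NF_trs (np P) (subt_at (adp_lhs \<gamma> \<cdot> \<sigma>) \<pi>')"
      using anf lhs_flat NF_imp_NF_trs_np unfolding ANF_def by blast
    show "sharp (flat (repl u \<pi> w)) = repl (sharp (flat u)) \<pi> (flat r \<cdot> \<sigma>)"
      using u by (simp add: repl_sharp flat_repl w)
  qed
  with reach show ?thesis
    unfolding reaches_lhs_def by (meson converse_rtrancl_into_rtrancl)
qed

lemma dp_bot_lhs: "\<exists>n \<in> dp_bot \<alpha>. fst n = sharp (adp_lhs \<alpha>)"
  unfolding dp_bot_def dp_def by auto

text \<open>The annotated subterm is a dependency pair of \<gamma>, and its reachability is an edge from that
  dependency pair to \<alpha> in the dependency graph.\<close>
lemma reaches_lhs_rhs_annot_imp_Pre:
  assumes wf: "\<forall>\<beta>\<in>P. adp_ok \<Sigma> P \<beta>" and "\<alpha> \<in> P"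
    and step: "step_ok P s \<pi> \<gamma> \<sigma>" and r: "(p, r) \<in> set (adp_rhs \<gamma>)"
    and \<rho>: "is_pos \<rho> r" "annot_at r \<rho>"
    and reach: "reaches_lhs P \<alpha> (subt_at r \<rho> \<cdot> \<sigma>)"
  shows "\<gamma> \<in> Pre P \<alpha>"
proof -
  define u where "u = subt_at r \<rho>"
  have "\<gamma> \<in> P" using step unfolding step_ok_def by blast
  then have ok: "adp_ok \<Sigma> P \<gamma>" using wf by blast
  obtain g us where u_Fun: "u = Fun g True us"
    using \<rho>(2) unfolding annot_at_def u_def by (auto split: trm.splits)
  define n1 where "n1 = (sharp (adp_lhs \<gamma>), Some (sharp (flat u)))"
  have n1: "n1 \<in> dp_bot \<gamma>"
    unfolding n1_def dp_bot_def dp_def u_def using r \<rho> by auto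
  obtain n2 where n2: "n2 \<in> dp_bot \<alpha>" "fst n2 = sharp (adp_lhs \<alpha>)"
    using dp_bot_lhs by blast
  have "flat (u \<cdot> \<sigma>) = flat u \<cdot> \<sigma>"
    using vars_subt_at[OF \<rho>(1)] step_ok_rhs_subst_flat[OF wf step r]
    by (intro flat_subst_flat_range) (auto simp: u_def)
  then have "sharp (flat (u \<cdot> \<sigma>)) = sharp (flat u) \<cdot> \<sigma>" using u_Fun by simp
  moreover have "ANF P (sharp (adp_lhs \<gamma>) \<cdot> \<sigma>)"
    using step adp_ok_sharp_lhs_subst[OF ok] unfolding step_ok_def by simp
  ultimately have "dg_edge P n1 n2"
    using reach n1 n2 \<open>\<gamma> \<in> P\<close> \<open>\<alpha> \<in> P\<close>
    unfolding dg_edge_def dpP_def reaches_lhs_def u_def n1_def by auto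
  then show ?thesis unfolding Pre_def using \<open>\<gamma> \<in> P\<close> n1 n2 by blast
qed

definition step_term ::
    "('f,'v) trm \<Rightarrow> nat list \<Rightarrow> ('f,'v) adp \<Rightarrow> ('f,'v) subst \<Rightarrow> ('f,'v) trm \<Rightarrow> ('f,'v) trm" where
  "step_term s \<pi> \<alpha> \<sigma> r =
     (if adp_flag \<alpha> \<and> annot_at s \<pi> then repl s \<pi> (r \<cdot> \<sigma>)
      else if adp_flag \<alpha> then repl s \<pi> (flat r \<cdot> \<sigma>)
      else if annot_at s \<pi> then flat_above \<pi> (repl s \<pi> (r \<cdot> \<sigma>))
      else flat_above \<pi> (repl s \<pi> (flat r \<cdot> \<sigma>)))"

lemma step_result_eq: "step_result s \<pi> \<alpha> \<sigma> = map (\<lambda>(p, r). (p, step_term s \<pi> \<alpha> \<sigma> r)) (adp_rhs \<alpha>)"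
  unfolding step_result_def step_term_def ..

lemma annot_count_if_step_term:
  fixes \<alpha> :: "('f,'v) adp"
  assumes wf: "\<forall>\<beta>\<in>P. adp_ok \<Sigma> P \<beta>"
    and step: "step_ok P s \<pi> \<gamma> \<sigma>" and r: "(p, r) \<in> set (adp_rhs \<gamma>)"
  defines "R \<equiv> reaches_lhs P \<alpha>"
  shows "annot_count_if R (step_term s \<pi> \<gamma> \<sigma> r) + annot_count_if R (subt_at s \<pi>)
    \<le> annot_count_if R s + annot_count_if R (if annot_at s \<pi> then r \<cdot> \<sigma> else flat r \<cdot> \<sigma>)"
proof (cases "adp_flag \<gamma>")
  case True
  have pos: "is_pos \<pi> s" and "\<gamma> \<in> P" and redex: "flat (subt_at s \<pi>) = adp_lhs \<gamma> \<cdot> \<sigma>"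
    and anf: "ANF P (adp_lhs \<gamma> \<cdot> \<sigma>)"
    using step unfolding step_ok_def by auto
  have "flat (r \<cdot> \<sigma>) = flat r \<cdot> \<sigma>" "flat (flat r \<cdot> \<sigma>) = flat r \<cdot> \<sigma>"
    using step_ok_rhs_subst_flat[OF wf step r] flat_subst_flat_range[of _ \<sigma>]
    by (metis vars_flat flat_idem)+
  then have "flat w = flat r \<cdot> \<sigma> \<Longrightarrow> annot_count_if R (repl s \<pi> w) + annot_count_if R (subt_at s \<pi>)
      \<le> annot_count_if R s + annot_count_if R w" for w
    using annot_count_if_repl[OF _ pos redex]
      reaches_lhs_np_step_backward[OF wf \<open>\<gamma> \<in> P\<close> True r anf] unfolding R_def by blast
  then show ?thesis
    using \<open>flat (r \<cdot> \<sigma>) = flat r \<cdot> \<sigma>\<close> \<open>flat (flat r \<cdot> \<sigma>) = flat r \<cdot> \<sigma>\<close> True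
    by (simp add: step_term_def)
next
  case False
  have "is_pos \<pi> s" using step unfolding step_ok_def by blast
  with False show ?thesis
    by (simp add: step_term_def annot_count_if_flat_above_repl)
qed

lemma reaches_lhs_redex:
  assumes "adp_ok \<Sigma> P \<alpha>" "step_ok P s \<pi> \<alpha> \<sigma>"
  shows "reaches_lhs P \<alpha> (subt_at s \<pi>)"
  unfolding reaches_lhs_def
proof (intro exI conjI)
  show "(sharp (flat (subt_at s \<pi>)), sharp (adp_lhs \<alpha>) \<cdot> \<sigma>) \<in> (istep (np P))\<^sup>*"
    using assms adp_ok_sharp_lhs_subst unfolding step_ok_def by fastforce
  show "ANF P (sharp (adp_lhs \<alpha>) \<cdot> \<sigma>)"
    using assms adp_ok_sharp_lhs_subst unfolding step_ok_def by fastforce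
qed

lemma annot_count_if_reaches_lhs_step:
  fixes \<alpha> :: "('f,'v) adp"
  assumes wf: "\<forall>\<beta>\<in>P. adp_ok \<Sigma> P \<beta>" and "\<alpha> \<in> P" and Pre: "Pre P \<alpha> \<inter> S = {}"
    and step: "step_ok P s \<pi> \<gamma> \<sigma>" and r: "(p, r) \<in> set (adp_rhs \<gamma>)"
  defines "R \<equiv> reaches_lhs P \<alpha>"
  shows "annot_count_if R (step_term s \<pi> \<gamma> \<sigma> r) + (if annot_at s \<pi> \<and> \<gamma> = \<alpha> then 1 else 0)
    \<le> annot_count_if R s + (if annot_at s \<pi> \<and> \<gamma> \<notin> S then annot_count r else 0)"
proof -
  have \<sigma>_flat: "\<And>x. x \<in> vars r \<Longrightarrow> flat (\<sigma> x) = \<sigma> x"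
    using step_ok_rhs_subst_flat[OF wf step r] .
  have consumed: "(if annot_at s \<pi> \<and> \<gamma> = \<alpha> then 1 else 0) \<le> annot_count_if R (subt_at s \<pi>)"
  proof (cases "annot_at s \<pi> \<and> \<gamma> = \<alpha>")
    case True
    then obtain f ts where "subt_at s \<pi> = Fun f True ts"
      unfolding annot_at_def by (auto split: trm.splits)
    moreover have "R (subt_at s \<pi>)"
      using reaches_lhs_redex[of \<Sigma> P \<alpha>] wf \<open>\<alpha> \<in> P\<close> step True unfolding R_def by blast
    ultimately show ?thesis by simp
  qed auto
  have created: "annot_count_if R (if annot_at s \<pi> then r \<cdot> \<sigma> else flat r \<cdot> \<sigma>)
      \<le> (if annot_at s \<pi> \<and> \<gamma> \<notin> S then annot_count r else 0)"
  proof -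
    have "annot_count_if R (flat r \<cdot> \<sigma>) = 0"
      using annot_count_if_subst_le[of "flat r" \<sigma> R] \<sigma>_flat by simp
    moreover have "annot_count_if R (r \<cdot> \<sigma>) = 0" if "\<gamma> \<in> S"
    proof (rule annot_count_if_subst_eq_0[OF \<sigma>_flat])
      show "\<not> R (subt_at r \<rho> \<cdot> \<sigma>)" if "is_pos \<rho> r" "annot_at r \<rho>" for \<rho>
        using reaches_lhs_rhs_annot_imp_Pre[OF wf \<open>\<alpha> \<in> P\<close> step r that] Pre \<open>\<gamma> \<in> S\<close>
        unfolding R_def by blast
    qed
    moreover have "annot_count_if R (r \<cdot> \<sigma>) \<le> annot_count r"
      using annot_count_if_subst_le \<sigma>_flat by blast
    ultimately show ?thesis by auto
  qed
  show ?thesis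
    using annot_count_if_step_term[OF wf step r, of \<alpha>] consumed created unfolding R_def
    by linarith
qed

section \<open>Expected step counts in chain trees\<close>

definition ct_arity :: "('f,'v) ctree \<Rightarrow> nat list \<Rightarrow> nat" where
  "ct_arity T v = length (adp_rhs (ct_adp T v))"

definition ct_level :: "('f,'v) ctree \<Rightarrow> nat \<Rightarrow> nat list set" where
  "ct_level T n = {v \<in> ct_nodes T. length v = n}"

definition ct_inner_below :: "('f,'v) ctree \<Rightarrow> nat \<Rightarrow> nat list set" where
  "ct_inner_below T n = {v. ct_inner T v \<and> length v < n}"

lemma ct_inner_node: "ct_inner T v \<Longrightarrow> v \<in> ct_nodes T"
  unfolding ct_inner_def by blast

lemma chain_tree_childD:
  assumes "chain_tree P t0 T" "ct_inner T v"
  shows "v @ [i] \<in> ct_nodes T \<longleftrightarrow> i < ct_arity T v"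
    and "i < ct_arity T v \<Longrightarrow> ct_prob T (v @ [i]) = ct_prob T v * fst (adp_rhs (ct_adp T v) ! i)"
    and "i < ct_arity T v \<Longrightarrow>
      ct_term T (v @ [i]) = step_term (ct_term T v) (ct_pos T v) (ct_adp T v) (ct_sub T v)
                              (snd (adp_rhs (ct_adp T v) ! i))"
    and "step_ok P (ct_term T v) (ct_pos T v) (ct_adp T v) (ct_sub T v)"
  using assms unfolding chain_tree_def Let_def ct_arity_def step_result_eq
  by (auto simp: case_prod_beta)

lemma chain_tree_parentD:
  assumes "chain_tree P t0 T" "v @ [i] \<in> ct_nodes T"
  shows "ct_inner T v" "i < ct_arity T v"
proof -
  show "ct_inner T v" using assms unfolding chain_tree_def ct_inner_def by blast
  then show "i < ct_arity T v" using chain_tree_childD(1)[OF assms(1)] assms(2) by blast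
qed

lemma chain_tree_adp_in:
  "chain_tree P t0 T \<Longrightarrow> ct_inner T v \<Longrightarrow> ct_adp T v \<in> P"
  using chain_tree_childD(4) unfolding step_ok_def by blast

lemma chain_tree_prob_nonneg:
  assumes ct: "chain_tree P t0 T" and wf: "\<forall>\<beta>\<in>P. adp_ok \<Sigma> P \<beta>"
  shows "v \<in> ct_nodes T \<Longrightarrow> 0 \<le> ct_prob T v"
proof (induction v rule: rev_induct)
  case Nil
  then show ?case using ct unfolding chain_tree_def by simp
next
  case (snoc i v)
  have inner: "ct_inner T v" and i: "i < ct_arity T v"
    using chain_tree_parentD[OF ct snoc.prems] by auto
  have "adp_ok \<Sigma> P (ct_adp T v)" using wf chain_tree_adp_in[OF ct inner] by blast
  then have "0 \<le> fst (adp_rhs (ct_adp T v) ! i)"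
    using i adp_ok_prob_nonneg unfolding ct_arity_def by (metis nth_mem prod.collapse)
  moreover have "0 \<le> ct_prob T v" using snoc.IH ct_inner_node[OF inner] by blast
  ultimately show ?case using chain_tree_childD(2)[OF ct inner i] by simp
qed

lemma ct_level_Suc:
  assumes "chain_tree P t0 T"
  shows "ct_level T (Suc n) =
    (\<lambda>(v, i). v @ [i]) ` (SIGMA v : {v \<in> ct_level T n. ct_inner T v}. {..<ct_arity T v})"
proof (intro set_eqI iffI)
  fix x assume x: "x \<in> ct_level T (Suc n)"
  then have "x \<noteq> []" unfolding ct_level_def by auto
  then obtain v i where x_eq: "x = v @ [i]" by (metis rev_exhaust)
  have "ct_inner T v" "i < ct_arity T v"
    using chain_tree_parentD[OF assms] x x_eq unfolding ct_level_def by auto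
  then show "x \<in> (\<lambda>(v, i). v @ [i]) ` (SIGMA v : {v \<in> ct_level T n. ct_inner T v}. {..<ct_arity T v})"
    using x x_eq ct_inner_node unfolding ct_level_def by fastforce
next
  fix x assume "x \<in> (\<lambda>(v, i). v @ [i]) ` (SIGMA v : {v \<in> ct_level T n. ct_inner T v}. {..<ct_arity T v})"
  then show "x \<in> ct_level T (Suc n)"
    using chain_tree_childD(1)[OF assms] unfolding ct_level_def by auto
qed

lemma finite_ct_level:
  assumes "chain_tree P t0 T"
  shows "finite (ct_level T n)"
proof (induction n)
  case 0
  have "ct_level T 0 \<subseteq> {[]}" unfolding ct_level_def by auto
  then show ?case using finite_subset by blast
next
  case (Suc n)
  then show ?case unfolding ct_level_Suc[OF assms] by auto
qed

lemma ct_inner_below_Suc: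
  "ct_inner_below T (Suc n) = ct_inner_below T n \<union> {v \<in> ct_level T n. ct_inner T v}"
  unfolding ct_inner_below_def ct_level_def using ct_inner_node by auto

lemma finite_ct_inner_below:
  assumes "chain_tree P t0 T"
  shows "finite (ct_inner_below T n)"
proof (induction n)
  case 0
  then show ?case unfolding ct_inner_below_def by simp
next
  case (Suc n)
  then show ?case unfolding ct_inner_below_Suc using finite_ct_level[OF assms] by auto
qed

lemma children_weighted_sum_le:
  assumes ct: "chain_tree P t0 T" and wf: "\<forall>\<beta>\<in>P. adp_ok \<Sigma> P \<beta>" and inner: "ct_inner T v"
    and le: "\<And>i. i < ct_arity T v \<Longrightarrow> g i \<le> M"
  shows "(\<Sum>i<ct_arity T v. ct_prob T (v @ [i]) * g i) \<le> ct_prob T v * M"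
proof -
  let ?q = "\<lambda>i. fst (adp_rhs (ct_adp T v) ! i)"
  have ok: "adp_ok \<Sigma> P (ct_adp T v)" using wf chain_tree_adp_in[OF ct inner] by blast
  have q_sum: "(\<Sum>i<ct_arity T v. ?q i) = 1"
    using adp_ok_prob_sum[OF ok]
    unfolding ct_arity_def by (simp add: sum_list_sum_nth atLeast0LessThan)
  have q_nonneg: "0 \<le> ?q i" if "i < ct_arity T v" for i
    using adp_ok_prob_nonneg[OF ok] that unfolding ct_arity_def by (metis nth_mem prod.collapse)
  have p_nonneg: "0 \<le> ct_prob T v"
    using chain_tree_prob_nonneg[OF ct wf] ct_inner_node[OF inner] .
  have "(\<Sum>i<ct_arity T v. ct_prob T (v @ [i]) * g i) = ct_prob T v * (\<Sum>i<ct_arity T v. ?q i * g i)"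
    by (simp add: chain_tree_childD(2)[OF ct inner] sum_distrib_left mult.assoc)
  also have "\<dots> \<le> ct_prob T v * (\<Sum>i<ct_arity T v. ?q i * M)"
    using p_nonneg q_nonneg le by (intro mult_left_mono sum_mono) auto
  also have "\<dots> = ct_prob T v * M"
    using q_sum by (simp add: sum_distrib_right[symmetric])
  finally show ?thesis .
qed

text \<open>Optional stopping at depth n.\<close>
lemma chain_tree_potential_bound:
  fixes \<Phi> b c :: "nat list \<Rightarrow> real"
  assumes ct: "chain_tree P t0 T" and wf: "\<forall>\<beta>\<in>P. adp_ok \<Sigma> P \<beta>"
    and step: "\<And>v i. ct_inner T v \<Longrightarrow> i < ct_arity T v \<Longrightarrow> \<Phi> (v @ [i]) + b v \<le> \<Phi> v + c v"
    and \<Phi>_nonneg: "\<And>v. 0 \<le> \<Phi> v"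
  shows "(\<Sum>v\<in>ct_inner_below T n. ct_prob T v * b v) + (\<Sum>v\<in>ct_level T n. ct_prob T v * \<Phi> v)
    \<le> \<Phi> [] + (\<Sum>v\<in>ct_inner_below T n. ct_prob T v * c v)"
proof (induction n)
  case 0
  have "ct_inner_below T 0 = {}" "ct_level T 0 = {[]}"
    using ct unfolding ct_inner_below_def ct_level_def chain_tree_def by auto
  then show ?case using ct unfolding chain_tree_def by simp
next
  case (Suc n)
  let ?p = "ct_prob T" and ?J = "{v \<in> ct_level T n. ct_inner T v}"
  have fin: "finite ?J" "finite (ct_inner_below T n)"
    using finite_ct_level[OF ct] finite_ct_inner_below[OF ct] by auto
  have disj: "ct_inner_below T n \<inter> ?J = {}"
    unfolding ct_inner_below_def ct_level_def by auto
  have "(\<Sum>v\<in>ct_level T (Suc n). ?p v * \<Phi> v) = (\<Sum>v\<in>?J. \<Sum>i<ct_arity T v. ?p (v @ [i]) * \<Phi> (v @ [i]))"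
    unfolding ct_level_Suc[OF ct]
    by (subst sum.reindex) (auto simp: inj_on_def sum.Sigma[OF fin(1)] case_prod_beta)
  also have "\<dots> \<le> (\<Sum>v\<in>?J. ?p v * (\<Phi> v + c v - b v))"
    using step by (intro sum_mono children_weighted_sum_le[OF ct wf]) (auto simp: algebra_simps)
  finally have "(\<Sum>v\<in>ct_level T (Suc n). ?p v * \<Phi> v) + (\<Sum>v\<in>?J. ?p v * b v)
      \<le> (\<Sum>v\<in>?J. ?p v * \<Phi> v) + (\<Sum>v\<in>?J. ?p v * c v)"
    by (simp add: algebra_simps sum.distrib sum_subtractf)
  moreover have "(\<Sum>v\<in>?J. ?p v * \<Phi> v) \<le> (\<Sum>v\<in>ct_level T n. ?p v * \<Phi> v)"
    using chain_tree_prob_nonneg[OF ct wf] finite_ct_level[OF ct] \<Phi>_nonneg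
    by (intro sum_mono2) (auto simp: ct_level_def)
  ultimately show ?case
    using Suc.IH fin disj unfolding ct_inner_below_Suc by (simp add: sum.union_disjoint)
qed

definition ct_counted :: "('f,'v) adp set \<Rightarrow> ('f,'v) ctree \<Rightarrow> nat list set" where
  "ct_counted S T = {v. ct_inner T v \<and> annot_at (ct_term T v) (ct_pos T v) \<and> ct_adp T v \<in> S}"

lemma edl_eq: "edl S T = (\<Sum>\<^sub>\<infinity>v\<in>ct_counted S T. ennreal (ct_prob T v))"
  unfolding edl_def ct_counted_def ..

lemma edl_Un_disjoint: "S1 \<inter> S2 = {} \<Longrightarrow> edl (S1 \<union> S2) T = edl S1 T + edl S2 T"
proof -
  assume "S1 \<inter> S2 = {}"
  then have "ct_counted (S1 \<union> S2) T = ct_counted S1 T \<union> ct_counted S2 T"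
    "ct_counted S1 T \<inter> ct_counted S2 T = {}"
    unfolding ct_counted_def by auto
  then show ?thesis
    unfolding edl_eq by (simp add: infsum_Un_disjoint nonneg_summable_on_complete)
qed

lemma edl_le_if_ct_inner_below_sums_le:
  assumes ct: "chain_tree P t0 T" and wf: "\<forall>\<beta>\<in>P. adp_ok \<Sigma> P \<beta>"
    and le: "\<And>n. ennreal (\<Sum>v\<in>ct_inner_below T n \<inter> ct_counted S T. ct_prob T v) \<le> X"
  shows "edl S T \<le> X"
  unfolding edl_eq
proof (rule infsum_le_finite_sums)
  show "(\<lambda>v. ennreal (ct_prob T v)) summable_on ct_counted S T"
    by (rule nonneg_summable_on_complete) simp
  fix F assume F: "finite F" "F \<subseteq> ct_counted S T"
  then obtain n where "\<forall>v\<in>F. length v < n"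
    by (metis finite_imageI finite_nat_set_iff_bounded image_eqI)
  then have F_sub: "F \<subseteq> ct_inner_below T n \<inter> ct_counted S T"
    using F(2) unfolding ct_inner_below_def ct_counted_def by auto
  have "(\<Sum>v\<in>F. ennreal (ct_prob T v)) \<le> (\<Sum>v\<in>ct_inner_below T n \<inter> ct_counted S T. ennreal (ct_prob T v))"
    using finite_ct_inner_below[OF ct] F_sub by (intro sum_mono2) auto
  also have "\<dots> = ennreal (\<Sum>v\<in>ct_inner_below T n \<inter> ct_counted S T. ct_prob T v)"
    using chain_tree_prob_nonneg[OF ct wf] ct_inner_node
    by (intro sum_ennreal) (auto simp: ct_inner_below_def)
  finally show "(\<Sum>v\<in>F. ennreal (ct_prob T v)) \<le> X" using le by (rule order_trans)
qed

lemma ct_inner_below_sum_le_edl: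
  assumes ct: "chain_tree P t0 T" and wf: "\<forall>\<beta>\<in>P. adp_ok \<Sigma> P \<beta>"
  shows "ennreal (\<Sum>v\<in>ct_inner_below T n \<inter> ct_counted S T. ct_prob T v) \<le> edl S T"
proof -
  have "ennreal (\<Sum>v\<in>ct_inner_below T n \<inter> ct_counted S T. ct_prob T v)
      = (\<Sum>v\<in>ct_inner_below T n \<inter> ct_counted S T. ennreal (ct_prob T v))"
    using chain_tree_prob_nonneg[OF ct wf] ct_inner_node
    by (intro sum_ennreal[symmetric]) (auto simp: ct_inner_below_def)
  also have "\<dots> \<le> edl S T"
    unfolding edl_eq using finite_ct_inner_below[OF ct]
    by (subst nonneg_infsum_complete) (auto intro: SUP_upper)
  finally show ?thesis .
qed

lemma edl_le_by_potential:
  fixes \<Phi> :: "('f,'v) trm \<Rightarrow> nat"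
  assumes ct: "chain_tree P t0 T" and wf: "\<forall>\<beta>\<in>P. adp_ok \<Sigma> P \<beta>"
    and step: "\<And>v i. ct_inner T v \<Longrightarrow> i < ct_arity T v \<Longrightarrow>
      \<Phi> (ct_term T (v @ [i])) + (if v \<in> ct_counted A T then 1 else 0)
        \<le> \<Phi> (ct_term T v) + (if v \<in> ct_counted B T then K else 0)"
  shows "edl A T \<le> of_nat (\<Phi> t0) + of_nat K * edl B T"
proof (rule edl_le_if_ct_inner_below_sums_le[OF ct wf])
  fix n
  let ?p = "ct_prob T" and ?I = "ct_inner_below T n"
  have restrict: "(\<Sum>v\<in>?I. ?p v * (if v \<in> ct_counted S T then 1 else 0)) = (\<Sum>v\<in>?I \<inter> ct_counted S T. ?p v)"
    for S using finite_ct_inner_below[OF ct] by (subst sum.inter_restrict) (auto intro: sum.cong)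
  have step_real: "real (\<Phi> (ct_term T (v @ [i]))) + (if v \<in> ct_counted A T then 1 else 0)
      \<le> real (\<Phi> (ct_term T v)) + real K * (if v \<in> ct_counted B T then 1 else 0)"
    if "ct_inner T v" "i < ct_arity T v" for v i
    using of_nat_mono[OF step[OF that], where 'a = real] by (auto split: if_splits)
  have "(\<Sum>v\<in>?I. ?p v * (if v \<in> ct_counted A T then 1 else 0))
      + (\<Sum>v\<in>ct_level T n. ?p v * real (\<Phi> (ct_term T v)))
      \<le> real (\<Phi> (ct_term T [])) + (\<Sum>v\<in>?I. ?p v * (real K * (if v \<in> ct_counted B T then 1 else 0)))"
    using step_real by (intro chain_tree_potential_bound[OF ct wf]) auto
  moreover have "0 \<le> (\<Sum>v\<in>ct_level T n. ?p v * real (\<Phi> (ct_term T v)))"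
    using chain_tree_prob_nonneg[OF ct wf] by (intro sum_nonneg) (auto simp: ct_level_def)
  moreover have "ct_term T [] = t0" using ct unfolding chain_tree_def by simp
  ultimately have "(\<Sum>v\<in>?I \<inter> ct_counted A T. ?p v) \<le> real (\<Phi> t0) + K * (\<Sum>v\<in>?I \<inter> ct_counted B T. ?p v)"
    by (simp add: restrict mult.left_commute flip: sum_distrib_left)
  then have "ennreal (\<Sum>v\<in>?I \<inter> ct_counted A T. ?p v)
      \<le> ennreal (real (\<Phi> t0) + K * (\<Sum>v\<in>?I \<inter> ct_counted B T. ?p v))"
    by (rule ennreal_leI)
  also have "\<dots> = of_nat (\<Phi> t0) + of_nat K * ennreal (\<Sum>v\<in>?I \<inter> ct_counted B T. ?p v)"
  proof -
    have "0 \<le> (\<Sum>v\<in>?I \<inter> ct_counted B T. ?p v)"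
      using chain_tree_prob_nonneg[OF ct wf] ct_inner_node
      by (intro sum_nonneg) (auto simp: ct_inner_below_def)
    then show ?thesis by (simp add: ennreal_plus ennreal_mult ennreal_of_nat_eq_real_of_nat)
  qed
  also have "\<dots> \<le> of_nat (\<Phi> t0) + of_nat K * edl B T"
    using ct_inner_below_sum_le_edl[OF ct wf] by (intro add_left_mono mult_left_mono) auto
  finally show "ennreal (\<Sum>v\<in>?I \<inter> ct_counted A T. ?p v) \<le> of_nat (\<Phi> t0) + of_nat K * edl B T" .
qed

definition rhs_annot_total :: "('f,'v) adp set \<Rightarrow> nat" where
  "rhs_annot_total P = (\<Sum>\<beta>\<in>P. sum_list (map (annot_count \<circ> snd) (adp_rhs \<beta>)))"

lemma annot_count_le_rhs_annot_total:
  assumes "finite P" "\<beta> \<in> P" "(p, r) \<in> set (adp_rhs \<beta>)"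
  shows "annot_count r \<le> rhs_annot_total P"
proof -
  have "annot_count r \<le> sum_list (map (annot_count \<circ> snd) (adp_rhs \<beta>))"
    using assms(3) member_le_sum_list[of "annot_count r" "map (annot_count \<circ> snd) (adp_rhs \<beta>)"]
    by force
  also have "\<dots> \<le> rhs_annot_total P"
    unfolding rhs_annot_total_def by (rule member_le_sum[OF assms(2)]) (use assms(1) in auto)
  finally show ?thesis .
qed

lemma edl_singleton_le:
  assumes PS: "is_adp_problem \<Sigma> (P, S)" and "\<alpha> \<in> S" and Pre: "Pre P \<alpha> \<inter> S = {}"
    and ct: "chain_tree P (sharp t) T" and "flat t = t"
  shows "edl {\<alpha>} T \<le> 1 + of_nat (rhs_annot_total P) * edl (P - S) T"
proof -
  let ?\<Phi> = "annot_count_if (reaches_lhs P \<alpha>)"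
  have wf: "\<forall>\<beta>\<in>P. adp_ok \<Sigma> P \<beta>" and "finite P" and "\<alpha> \<in> P"
    using PS \<open>\<alpha> \<in> S\<close> unfolding is_adp_problem_def by auto
  have "?\<Phi> (sharp t) \<le> annot_count (sharp t)" by (rule annot_count_if_le)
  also have "\<dots> \<le> 1 + annot_count t" by (cases t) auto
  also have "\<dots> = 1" using \<open>flat t = t\<close> by (metis annot_count_flat add_0_right)
  finally have "(of_nat (?\<Phi> (sharp t)) :: ennreal) \<le> 1"
    by (metis of_nat_1 of_nat_mono)
  moreover have "edl {\<alpha>} T \<le> of_nat (?\<Phi> (sharp t)) + of_nat (rhs_annot_total P) * edl (P - S) T"
  proof (rule edl_le_by_potential[OF ct wf])
    fix v i assume inner: "ct_inner T v" and i: "i < ct_arity T v"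
    let ?r = "snd (adp_rhs (ct_adp T v) ! i)"
    have r: "(fst (adp_rhs (ct_adp T v) ! i), ?r) \<in> set (adp_rhs (ct_adp T v))"
      using i unfolding ct_arity_def by simp
    have "annot_count ?r \<le> rhs_annot_total P"
      using annot_count_le_rhs_annot_total[OF \<open>finite P\<close> chain_tree_adp_in[OF ct inner] r] .
    then show "?\<Phi> (ct_term T (v @ [i])) + (if v \<in> ct_counted {\<alpha>} T then 1 else 0)
        \<le> ?\<Phi> (ct_term T v) + (if v \<in> ct_counted (P - S) T then rhs_annot_total P else 0)"
      using annot_count_if_reaches_lhs_step[OF wf \<open>\<alpha> \<in> P\<close> Pre chain_tree_childD(4)[OF ct inner] r]
        chain_tree_childD(3)[OF ct inner i] chain_tree_adp_in[OF ct inner] inner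
      unfolding ct_counted_def by (auto split: if_splits)
  qed
  ultimately show ?thesis
    by (meson add_right_mono order_trans)
qed

lemma edl_le_rc_fun:
  assumes "basic \<Sigma> P t" "tsize t \<le> n" "chain_tree P (sharp t) T"
  shows "edl S T \<le> rc_fun \<Sigma> (P, S) n"
proof -
  have "edl S T \<le> edh (P, S) t"
    unfolding edh_def using assms(3) by (intro Sup_upper) auto
  also have "\<dots> \<le> rc_fun \<Sigma> (P, S) n"
    unfolding rc_fun_def using assms(1,2) by (intro Sup_upper) auto
  finally show ?thesis .
qed

lemma rc_fun_leI:
  "(\<And>t T. basic \<Sigma> P t \<Longrightarrow> tsize t \<le> n \<Longrightarrow> chain_tree P (sharp t) T \<Longrightarrow> edl S T \<le> X) \<Longrightarrow>
    rc_fun \<Sigma> (P, S) n \<le> X"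
  unfolding rc_fun_def edh_def by (auto intro!: Sup_least)

lemma mono_rc_fun: "mono (rc_fun \<Sigma> PS)"
  unfolding mono_def rc_fun_def by (auto intro!: Sup_subset_mono)

lemma rc_fun_remove_le:
  assumes PS: "is_adp_problem \<Sigma> (P, S)" and "\<alpha> \<in> S" and Pre: "Pre P \<alpha> \<inter> S = {}"
  defines "K \<equiv> of_nat (rhs_annot_total P) :: ennreal"
  shows "rc_fun \<Sigma> (P, S) n \<le> rc_fun \<Sigma> (P, S - {\<alpha>}) n + 1 + K * rc_fun \<Sigma> (P, P - S) n"
    and "rc_fun \<Sigma> (P, P - (S - {\<alpha>})) n \<le> rc_fun \<Sigma> (P, P - S) n + 1 + K * rc_fun \<Sigma> (P, P - S) n"
proof -
  have "(S - {\<alpha>}) \<union> {\<alpha>} = S" "(P - S) \<union> {\<alpha>} = P - (S - {\<alpha>})"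
    "(S - {\<alpha>}) \<inter> {\<alpha>} = {}" "(P - S) \<inter> {\<alpha>} = {}"
    using PS \<open>\<alpha> \<in> S\<close> unfolding is_adp_problem_def by auto
  then have split: "edl S T = edl (S - {\<alpha>}) T + edl {\<alpha>} T"
    "edl (P - (S - {\<alpha>})) T = edl (P - S) T + edl {\<alpha>} T" for T
    using edl_Un_disjoint by metis+
  have removed: "edl {\<alpha>} T \<le> 1 + K * rc_fun \<Sigma> (P, P - S) n"
    if "basic \<Sigma> P t" "tsize t \<le> n" "chain_tree P (sharp t) T" for t T
  proof -
    have "flat t = t" using that(1) unfolding basic_def by blast
    then have "edl {\<alpha>} T \<le> 1 + K * edl (P - S) T"
      using edl_singleton_le[OF PS \<open>\<alpha> \<in> S\<close> Pre that(3)] unfolding K_def by blast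
    also have "\<dots> \<le> 1 + K * rc_fun \<Sigma> (P, P - S) n"
      using edl_le_rc_fun[OF that] by (intro add_left_mono mult_left_mono) auto
    finally show ?thesis .
  qed
  show "rc_fun \<Sigma> (P, S) n \<le> rc_fun \<Sigma> (P, S - {\<alpha>}) n + 1 + K * rc_fun \<Sigma> (P, P - S) n"
  proof (rule rc_fun_leI)
    fix t T assume "basic \<Sigma> P t" "tsize t \<le> n" "chain_tree P (sharp t) T"
    then show "edl S T \<le> rc_fun \<Sigma> (P, S - {\<alpha>}) n + 1 + K * rc_fun \<Sigma> (P, P - S) n"
      unfolding split add.assoc by (intro add_mono edl_le_rc_fun removed)
  qed
  show "rc_fun \<Sigma> (P, P - (S - {\<alpha>})) n \<le> rc_fun \<Sigma> (P, P - S) n + 1 + K * rc_fun \<Sigma> (P, P - S) n"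
  proof (rule rc_fun_leI)
    fix t T assume "basic \<Sigma> P t" "tsize t \<le> n" "chain_tree P (sharp t) T"
    then show "edl (P - (S - {\<alpha>})) T \<le> rc_fun \<Sigma> (P, P - S) n + 1 + K * rc_fun \<Sigma> (P, P - S) n"
      unfolding split add.assoc by (intro add_mono edl_le_rc_fun removed)
  qed
qed

section \<open>Complexity classes\<close>

fun within_cplx :: "cplx \<Rightarrow> (nat \<Rightarrow> ennreal) \<Rightarrow> bool" where
  "within_cplx (Pol a) f \<longleftrightarrow> bigO f (\<lambda>n. real n ^ a)"
| "within_cplx Exp f \<longleftrightarrow> (\<exists>k. bigO f (\<lambda>n. 2 ^ (n ^ k)))"
| "within_cplx Exp2 f \<longleftrightarrow> (\<exists>k. bigO f (\<lambda>n. 2 ^ (2 ^ (n ^ k))))"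
| "within_cplx Fin f \<longleftrightarrow> (\<forall>n. f n \<noteq> \<infinity>)"
| "within_cplx Omega f \<longleftrightarrow> True"

lemma bigO_mono:
  assumes "bigO g \<phi>" "\<And>n. n \<ge> M \<Longrightarrow> 0 \<le> \<phi> n \<and> \<phi> n \<le> \<psi> n"
  shows "bigO g \<psi>"
proof -
  obtain c N where cN: "\<forall>n\<ge>N. g n \<le> ennreal (c * \<phi> n)" using assms(1) unfolding bigO_def by blast
  have "g n \<le> ennreal (max c 0 * \<psi> n)" if "n \<ge> max N M" for n
  proof -
    have "g n \<le> ennreal (c * \<phi> n)" using cN that by auto
    also have "\<dots> \<le> ennreal (max c 0 * \<psi> n)"
      using assms(2)[of n] that by (intro ennreal_leI) (auto intro: mult_mono mult_right_mono)
    finally show ?thesis .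
  qed
  then show ?thesis unfolding bigO_def by blast
qed

lemma bigO_obtain_nonneg:
  assumes "bigO g \<phi>" "\<And>n. n \<ge> M \<Longrightarrow> 1 \<le> \<phi> n"
  obtains c N where "0 \<le> c" "\<And>n. n \<ge> N \<Longrightarrow> g n \<le> ennreal (c * \<phi> n)"
proof -
  obtain c N where cN: "\<forall>n\<ge>N. g n \<le> ennreal (c * \<phi> n)" using assms(1) unfolding bigO_def by blast
  have "g n \<le> ennreal (max c 0 * \<phi> n)" if "n \<ge> max N M" for n
  proof -
    have "g n \<le> ennreal (c * \<phi> n)" using cN that by auto
    also have "\<dots> \<le> ennreal (max c 0 * \<phi> n)"
      using assms(2)[of n] that by (intro ennreal_leI mult_right_mono) auto
    finally show ?thesis .
  qed
  then show ?thesis using that[of "max c 0" "max N M"] by simp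
qed

lemma bigO_affine:
  fixes f g h :: "nat \<Rightarrow> ennreal"
  assumes g: "bigO g \<phi>" and h: "bigO h \<phi>" and \<phi>: "\<And>n. n \<ge> M \<Longrightarrow> 1 \<le> \<phi> n"
    and le: "\<And>n. f n \<le> g n + 1 + of_nat K * h n"
  shows "bigO f \<phi>"
proof -
  obtain c1 N1 where c1: "0 \<le> c1" "\<And>n. n \<ge> N1 \<Longrightarrow> g n \<le> ennreal (c1 * \<phi> n)"
    using bigO_obtain_nonneg[OF g \<phi>] by blast
  obtain c2 N2 where c2: "0 \<le> c2" "\<And>n. n \<ge> N2 \<Longrightarrow> h n \<le> ennreal (c2 * \<phi> n)"
    using bigO_obtain_nonneg[OF h \<phi>] by blast
  have "f n \<le> ennreal ((c1 + 1 + real K * c2) * \<phi> n)" if n: "n \<ge> max (max N1 N2) M" for n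
  proof -
    have \<phi>_n: "1 \<le> \<phi> n" using \<phi> n by auto
    have "f n \<le> ennreal (c1 * \<phi> n) + ennreal (\<phi> n) + of_nat K * ennreal (c2 * \<phi> n)"
      using le[of n] c1(2)[of n] c2(2)[of n] n \<phi>_n
      by (elim order_trans) (intro add_mono mult_left_mono; simp add: ennreal_leI)
    also have "\<dots> = ennreal ((c1 + 1 + real K * c2) * \<phi> n)"
      using \<phi>_n c1(1) c2(1)
      by (simp add: ennreal_of_nat_eq_real_of_nat ennreal_mult[symmetric] ennreal_plus[symmetric]
          algebra_simps del: ennreal_plus)
    finally show ?thesis .
  qed
  then show ?thesis unfolding bigO_def by blast
qed

lemma bigO_finite:
  assumes "mono g" "bigO g \<phi>"
  shows "g n \<noteq> \<infinity>"
proof -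
  obtain c N where cN: "\<forall>n\<ge>N. g n \<le> ennreal (c * \<phi> n)" using assms(2) unfolding bigO_def by blast
  have "g n \<le> g (max n N)" using assms(1) by (simp add: monoD)
  also have "\<dots> \<le> ennreal (c * \<phi> (max n N))" using cN by auto
  finally show ?thesis by (auto simp: top_unique)
qed

lemma within_cplx_iota: "within_cplx (iota f) f"
  unfolding iota_def by (auto intro: LeastI_ex)

lemma iota_le_if_within_cplx: "within_cplx X f \<Longrightarrow> iota f \<le> X"
  by (cases X) (auto simp: iota_def less_eq_cplx_def intro: Least_le)

lemma within_Pol_mono: "within_cplx (Pol a) f \<Longrightarrow> a \<le> b \<Longrightarrow> within_cplx (Pol b) f"
  by (auto elim!: bigO_mono[where M = 1] intro: power_increasing)

lemma within_Pol_Exp: "within_cplx (Pol a) f \<Longrightarrow> within_cplx Exp f"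
proof (auto elim!: bigO_mono[where M = 0] intro!: exI[of _ a])
  fix n :: nat
  have "real (n ^ a) \<le> real ((2::nat) ^ (n ^ a))" using less_exp[of "n ^ a"] by linarith
  then show "real n ^ a \<le> 2 ^ (n ^ a)" by simp
qed

lemma within_Exp_Exp2: "within_cplx Exp f \<Longrightarrow> within_cplx Exp2 f"
proof -
  assume "within_cplx Exp f"
  then obtain k where k: "bigO f (\<lambda>n. 2 ^ (n ^ k))" by auto
  have "bigO f (\<lambda>n. 2 ^ (2 ^ (n ^ k)))"
  proof (rule bigO_mono[OF k, where M = 0])
    fix n :: nat
    show "0 \<le> (2::real) ^ (n ^ k) \<and> (2::real) ^ (n ^ k) \<le> 2 ^ (2 ^ (n ^ k))"
      using less_exp[of "n ^ k"] by (auto intro: power_increasing)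
  qed
  then show ?thesis by auto
qed

lemma within_Exp2_Fin: "mono f \<Longrightarrow> within_cplx Exp2 f \<Longrightarrow> within_cplx Fin f"
  using bigO_finite by auto

lemma within_cplx_mono:
  assumes "mono f" "X \<le> Y" "within_cplx X f"
  shows "within_cplx Y f"
  using assms within_Pol_mono within_Pol_Exp within_Exp_Exp2 within_Exp2_Fin[OF \<open>mono f\<close>]
  by (cases X; cases Y) (auto simp: less_eq_cplx_def)

lemma iota_le_iff_within_cplx: "mono f \<Longrightarrow> iota f \<le> X \<longleftrightarrow> within_cplx X f"
  using iota_le_if_within_cplx within_cplx_iota within_cplx_mono by blast

lemma within_cplx_affine:
  assumes "within_cplx X g" "within_cplx X h" and le: "\<And>n. f n \<le> g n + 1 + of_nat K * h n"
  shows "within_cplx X f"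
proof (cases X)
  case (Pol a)
  then have "bigO g (\<lambda>n. real n ^ a)" "bigO h (\<lambda>n. real n ^ a)" using assms by auto
  then have "bigO f (\<lambda>n. real n ^ a)"
    by (rule bigO_affine[where M = 1, OF _ _ _ le]) (simp add: one_le_power)
  with Pol show ?thesis by simp
next
  case Exp
  then obtain k1 k2 where "bigO g (\<lambda>n. 2 ^ (n ^ k1))" "bigO h (\<lambda>n. 2 ^ (n ^ k2))"
    using assms by auto
  then have "bigO g (\<lambda>n. 2 ^ (n ^ max k1 k2))" "bigO h (\<lambda>n. 2 ^ (n ^ max k1 k2))"
    by (auto elim!: bigO_mono[where M = 1] intro!: power_increasing)
  then have "bigO f (\<lambda>n. 2 ^ (n ^ max k1 k2))" by (rule bigO_affine[where M = 0, OF _ _ _ le]) simp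
  with Exp show ?thesis by auto
next
  case Exp2
  then obtain k1 k2 where "bigO g (\<lambda>n. 2 ^ (2 ^ (n ^ k1)))" "bigO h (\<lambda>n. 2 ^ (2 ^ (n ^ k2)))"
    using assms by auto
  then have "bigO g (\<lambda>n. 2 ^ (2 ^ (n ^ max k1 k2)))" "bigO h (\<lambda>n. 2 ^ (2 ^ (n ^ max k1 k2)))"
    by (auto elim!: bigO_mono[where M = 1] intro!: power_increasing)
  then have "bigO f (\<lambda>n. 2 ^ (2 ^ (n ^ max k1 k2)))" by (rule bigO_affine[where M = 0, OF _ _ _ le]) simp
  with Exp2 show ?thesis by auto
next
  case Fin
  have "f n \<noteq> \<infinity>" for n
  proof -
    have "g n + 1 + of_nat K * h n \<noteq> \<infinity>"
      using assms(1,2) Fin by (simp add: ennreal_mult_eq_top_iff)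
    then show ?thesis using le[of n] by (auto simp: top_unique)
  qed
  with Fin show ?thesis by simp
qed simp

lemma iota_affine_le_max:
  fixes f g h :: "nat \<Rightarrow> ennreal"
  assumes "mono g" "mono h" and le: "\<And>n. f n \<le> g n + 1 + of_nat K * h n"
  shows "iota f \<le> max (iota g) (iota h)"
proof -
  have "within_cplx (max (iota g) (iota h)) g" "within_cplx (max (iota g) (iota h)) h"
    using assms(1,2) by (simp_all add: iota_le_iff_within_cplx[symmetric])
  then show ?thesis by (intro iota_le_if_within_cplx within_cplx_affine[OF _ _ le])
qed

lemma max_Pol_0 [simp]: "max X (Pol 0) = X"
  by (cases X) (auto simp: max_def less_eq_cplx_def)

theorem mainTheorem8:
  fixes \<Sigma> :: "('f \<times> nat) set" and P S :: "('f,'v) adp set" and \<alpha> :: "('f,'v) adp"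
  assumes "finite \<Sigma>"
    and "infinite (UNIV :: 'v set)"
    and "is_adp_problem \<Sigma> (P, S)"
    and "\<alpha> \<in> S"
    and "Pre P \<alpha> \<inter> S = {}"
  shows "sound_output \<Sigma> (P, S) (Pol 0) [(P, S - {\<alpha>})]"
proof -
  note bounds = rc_fun_remove_le[OF assms(3-5)]
  have removed: "iota_prob \<Sigma> (P, S) \<le> max (iota_prob \<Sigma> (P, S - {\<alpha>})) (iota_prob \<Sigma> (P, P - S))"
    unfolding iota_prob_def using bounds(1) by (intro iota_affine_le_max mono_rc_fun)
  have unsolved: "iota_prob \<Sigma> (P, P - (S - {\<alpha>})) \<le> iota_prob \<Sigma> (P, P - S)"
    unfolding iota_prob_def using iota_affine_le_max[OF mono_rc_fun mono_rc_fun bounds(2)] by simp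
  show ?thesis
    unfolding sound_output_def
  proof (intro allI impI)
    fix T p T'
    assume "proof_tree \<Sigma> T \<and> well_formed \<Sigma> T \<and> pt_at T p = Some T' \<and> pt_prob T' = (P, S)"
    then have "iota_prob \<Sigma> (P, P - S) \<le> pt_prefix T p"
      unfolding well_formed_def by fastforce
    with removed unsolved show "iota_prob \<Sigma> (P, S)
        \<le> fold max (map (iota_prob \<Sigma>) [(P, S - {\<alpha>})]) (max (pt_prefix T p) (Pol 0)) \<and>
      (\<forall>(Pi, Si) \<in> set [(P, S - {\<alpha>})]. iota_prob \<Sigma> (Pi, Pi - Si) \<le> max (pt_prefix T p) (Pol 0))"
      by (auto intro: order_trans max.mono)
  qed
qed

end
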